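(* Let $D>0$ be a square-free integer. Let $z_1=\frac{a_1+b_1\sqrt{-D}}{c_1}$ and $z_2=\frac{a_2+b_2\sqrt{-D}}{c_2}$ be elements of $G_D(\mathbb{Q})$ with $a_i,b_i\in\mathbb{Z}$, $c_i$ positive integers, and $\gcd(a_1,b_1)=\gcd(a_2,b_2)=\gcd(c_1,c_2)=1$. Then $(a_1a_2-Db_1b_2)^2+D(a_1b_2+a_2b_1)^2=(c_1c_2)^2$, and $a_1a_2-Db_1b_2$ and $a_1b_2+a_2b_1$ are coprime; i.e. $(a_1a_2-Db_1b_2,\ a_1b_2+a_2b_1,\ c_1c_2)$ is a normalized solution (up to signs of the first two entries).
   Context: $G_D(\mathbb{Q}):=\{a+b\sqrt{-D}\in\mathbb{Q}[\sqrt{-D}]: a^2+Db^2=1\}$. A normalized solution of $x^2+Dy^2=z^2$ is a triple $(a,b,c)$ of natural numbers with $a^2+Db^2=c^2$ and $\gcd(a,b,c)=1$. *)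

theory Defs
  imports "HOL-Computational_Algebra.Computational_Algebra"
begin

text \<open>Elements x + y sqrt(-D) of Q[sqrt(-D)] are represented by the pair (x, y) of rationals.
  G_D(Q) is the set of norm-one elements: x^2 + D y^2 = 1.\<close>
definition G_D :: "int \<Rightarrow> (rat \<times> rat) set" where
  "G_D D = {(x, y). x^2 + of_int D * y^2 = 1}"

definition normalized_solution :: "int \<Rightarrow> nat \<Rightarrow> nat \<Rightarrow> nat \<Rightarrow> bool" where
  "normalized_solution D a b c \<longleftrightarrow>
     int a ^ 2 + D * int b ^ 2 = int c ^ 2 \<and> gcd (gcd a b) c = 1"

end

theory Submission
  imports Defs
begin

text \<open>The numerator of z1 z2 is the product (a1 + b1 sqrt(-D)) (a2 + b2 sqrt(-D)), and the
  multiplicativity of the norm x^2 + D y^2 gives the equation. Multiplying this product back by the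
  conjugate a2 - b2 sqrt(-D) yields (a1 + b1 sqrt(-D)) times the norm c2^2 of the second factor, so
  a common divisor of its two coordinates divides a1 c2^2 and b1 c2^2, hence c2^2 since a1, b1 are
  coprime. By symmetry it also divides c1^2, and c1, c2 are coprime.\<close>

lemma G_D_fraction_iff:
  fixes D a b c :: int
  assumes "c \<noteq> 0"
  shows "(of_int a / of_int c, of_int b / of_int c) \<in> G_D D \<longleftrightarrow> a^2 + D*b^2 = c^2"
proof -
  have "(of_int a / of_int c, of_int b / of_int c) \<in> G_D D \<longleftrightarrow>
        (of_int a)^2 + of_int D * (of_int b)^2 = (of_int c ^ 2 :: rat)"
    using assms by (auto simp add: G_D_def field_simps power2_eq_square)
  also have "\<dots> \<longleftrightarrow> a^2 + D*b^2 = c^2"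
    by (metis of_int_eq_iff of_int_add of_int_mult of_int_power)
  finally show ?thesis .
qed

lemma norm_form_mult:
  fixes D a1 b1 a2 b2 :: "'a :: comm_ring_1"
  shows "(a1*a2 - D*b1*b2)^2 + D*(a1*b2 + a2*b1)^2 = (a1^2 + D*b1^2) * (a2^2 + D*b2^2)"
  by (simp add: algebra_simps power2_eq_square)

lemma common_divisor_of_product_dvd_norm:
  fixes D a1 b1 a2 b2 d :: "'a :: ring_gcd"
  assumes "coprime a1 b1"
    and "d dvd a1*a2 - D*b1*b2" and "d dvd a1*b2 + a2*b1"
  shows "d dvd a2^2 + D*b2^2"
proof -
  let ?A = "a1*a2 - D*b1*b2" and ?B = "a1*b2 + a2*b1" and ?n = "a2^2 + D*b2^2"
  have "?A*a2 + D*?B*b2 = a1*?n" and "?B*a2 - ?A*b2 = b1*?n"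
    by (simp_all add: algebra_simps power2_eq_square)
  then have "d dvd a1*?n" and "d dvd b1*?n"
    using assms(2,3) by (metis dvd_add dvd_diff dvd_mult dvd_mult2)+
  then have "d dvd gcd (a1*?n) (b1*?n)"
    by simp
  also have "gcd (a1*?n) (b1*?n) = normalize ?n"
    using assms(1) by (simp add: gcd_mult_right gcd.commute)
  finally show ?thesis
    by simp
qed

lemma coprime_product_components:
  fixes D a1 b1 a2 b2 :: "'a :: ring_gcd"
  assumes "coprime a1 b1" and "coprime a2 b2"
    and "coprime (a1^2 + D*b1^2) (a2^2 + D*b2^2)"
  shows "coprime (a1*a2 - D*b1*b2) (a1*b2 + a2*b1)"
proof (rule coprimeI)
  fix d
  assume dA: "d dvd a1*a2 - D*b1*b2" and dB: "d dvd a1*b2 + a2*b1"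
  have "d dvd a2^2 + D*b2^2"
    using common_divisor_of_product_dvd_norm[OF assms(1) dA dB] .
  moreover have "d dvd a1^2 + D*b1^2"
    using common_divisor_of_product_dvd_norm[OF assms(2), of d a1 D b1] dA dB
    by (simp add: ac_simps)
  ultimately show "is_unit d"
    using assms(3) by (meson coprime_common_divisor)
qed

lemma normalized_solution_of_int:
  fixes D a b c :: int
  assumes "a^2 + D*b^2 = c^2" and "coprime a b" and "c \<ge> 0"
  shows "normalized_solution D (nat \<bar>a\<bar>) (nat \<bar>b\<bar>) (nat c)"
proof -
  have "gcd (nat \<bar>a\<bar>) (nat \<bar>b\<bar>) = 1"
    using assms(2) gcd_int_def[of a b] by simp
  then show ?thesis
    using assms(1,3) by (simp add: normalized_solution_def)
qed

theorem lemma3p7: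
  fixes D a1 b1 c1 a2 b2 c2 :: int
  assumes "D > 0" and "squarefree D"
    and "c1 > 0" and "c2 > 0"
    and "(of_int a1 / of_int c1, of_int b1 / of_int c1) \<in> G_D D"
    and "(of_int a2 / of_int c2, of_int b2 / of_int c2) \<in> G_D D"
    and "gcd a1 b1 = 1" and "gcd a2 b2 = 1" and "gcd c1 c2 = 1"
  shows "(a1*a2 - D*b1*b2)^2 + D*(a1*b2 + a2*b1)^2 = (c1*c2)^2
         \<and> coprime (a1*a2 - D*b1*b2) (a1*b2 + a2*b1)
         \<and> normalized_solution D (nat \<bar>a1*a2 - D*b1*b2\<bar>) (nat \<bar>a1*b2 + a2*b1\<bar>) (nat (c1*c2))"
proof -
  have norm1: "a1^2 + D*b1^2 = c1^2" and norm2: "a2^2 + D*b2^2 = c2^2"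
    using assms(3-6) G_D_fraction_iff by auto
  have eq: "(a1*a2 - D*b1*b2)^2 + D*(a1*b2 + a2*b1)^2 = (c1*c2)^2"
    by (simp add: norm_form_mult norm1 norm2 power_mult_distrib)
  have "coprime (c1^2) (c2^2)"
    using assms(9) by (simp add: coprime_iff_gcd_eq_1[symmetric])
  then have cop: "coprime (a1*a2 - D*b1*b2) (a1*b2 + a2*b1)"
    using assms(7,8) by (simp add: coprime_product_components norm1 norm2 coprime_iff_gcd_eq_1[symmetric])
  show ?thesis
    using eq cop normalized_solution_of_int[OF eq cop] assms(3,4) by simp
qed

end
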